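(* Let $A$ be an involutive alphabet, let $\Gamma$ be an involutive $A$-tree and let $u,v$ be nodes of $\Gamma$. Then $\Gamma$ with root $u$ is regular if and only if $\Gamma$ with root $v$ is regular.
   Context: An $A$-graph is a pair $(V,E)$ with $E\subseteq V\times A\times V$; it is involutive if $(u,a,v)\in E\iff(v,a^{-1},u)\in E$. A path is reduced if it contains no edge immediately followed by its inverse edge. A rooted involutive graph is a tree if every vertex is the end of a unique reduced path from the root. A multi-edge NFA (mNFA) is $\mathcal{A}=(Q,A,T,\alpha,\lambda,\omega)$ with finite state set $Q$, finite alphabet $A$, finite transition set $T$, and maps $\alpha,\omega\colon T\to Q$ (start, end) and $\lambda\colon T\to A$ (label); parallel transitions with equal label are allowed. A run is a sequence of transitions $\tau_1\cdots\tau_\ell$ with $\omega(\tau_i)=\alpha(\tau_{i+1})$. For a state $p$, $\Gamma(p)$ is the graph whose nodes are runs starting at $p$ (root: the empty run), with an edge $\varrho\to\varrho\tau$ labeled $\lambda(\tau)$, closed under adding inverse edges (passing to $A^{\pm1}$ if $A$ is not involutive); node $\varrho$ is labeled by the state where it ends. A rooted node-labeled involutive $A$-tree is regular if it is isomorphic (as a rooted node-labeled $A$-graph, i.e. via a root-preserving label-preserving graph isomorphism together with a bijection between the sets of node labels compatible with the labelings) to $\Gamma(p)$ for some state $p$ of an mNFA with alphabet $A$; a rooted involutive $A$-tree is regular if it is regular for some node labeling. *)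

theory Defs
  imports Main
begin

definition involutive_alphabet :: "'a set \<Rightarrow> ('a \<Rightarrow> 'a) \<Rightarrow> bool" where
  "involutive_alphabet A iv \<longleftrightarrow> finite A \<and> (\<forall>a\<in>A. iv a \<in> A \<and> iv (iv a) = a)"

definition A_graph :: "'a set \<Rightarrow> 'v set \<Rightarrow> ('v \<times> 'a \<times> 'v) set \<Rightarrow> bool" where
  "A_graph A V E \<longleftrightarrow> E \<subseteq> V \<times> A \<times> V"

definition involutive_graph :: "('a \<Rightarrow> 'a) \<Rightarrow> ('v \<times> 'a \<times> 'v) set \<Rightarrow> bool" where
  "involutive_graph iv E \<longleftrightarrow> (\<forall>u a v. (u, a, v) \<in> E \<longleftrightarrow> (v, iv a, u) \<in> E)"

definition inv_edge :: "('a \<Rightarrow> 'a) \<Rightarrow> ('v \<times> 'a \<times> 'v) \<Rightarrow> ('v \<times> 'a \<times> 'v)" where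
  "inv_edge iv e = (case e of (u, a, v) \<Rightarrow> (v, iv a, u))"

fun is_path :: "('v \<times> 'a \<times> 'v) set \<Rightarrow> 'v \<Rightarrow> ('v \<times> 'a \<times> 'v) list \<Rightarrow> 'v \<Rightarrow> bool" where
  "is_path E x [] y \<longleftrightarrow> x = y"
| "is_path E x (e # es) y \<longleftrightarrow> e \<in> E \<and> fst e = x \<and> is_path E (snd (snd e)) es y"

definition reduced_path :: "('a \<Rightarrow> 'a) \<Rightarrow> ('v \<times> 'a \<times> 'v) list \<Rightarrow> bool" where
  "reduced_path iv es \<longleftrightarrow> (\<forall>i. Suc i < length es \<longrightarrow> es ! Suc i \<noteq> inv_edge iv (es ! i))"

definition rooted_tree :: "('a \<Rightarrow> 'a) \<Rightarrow> 'v set \<Rightarrow> ('v \<times> 'a \<times> 'v) set \<Rightarrow> 'v \<Rightarrow> bool" where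
  "rooted_tree iv V E r \<longleftrightarrow> r \<in> V \<and> (\<forall>v\<in>V. \<exists>!es. is_path E r es v \<and> reduced_path iv es)"

text \<open>States and transitions are taken to be finite sets of natural numbers (w.l.o.g.).\<close>
record 'a mnfa =
  states :: "nat set"
  trans :: "nat set"
  src_st :: "nat \<Rightarrow> nat"
  lab :: "nat \<Rightarrow> 'a"
  tgt_st :: "nat \<Rightarrow> nat"

definition mnfa_wf :: "'a set \<Rightarrow> 'a mnfa \<Rightarrow> bool" where
  "mnfa_wf A M \<longleftrightarrow> finite (states M) \<and> finite (trans M) \<and>
     (\<forall>t\<in>trans M. src_st M t \<in> states M \<and> tgt_st M t \<in> states M \<and> lab M t \<in> A)"

fun is_run :: "'a mnfa \<Rightarrow> nat \<Rightarrow> nat list \<Rightarrow> bool" where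
  "is_run M p [] \<longleftrightarrow> True"
| "is_run M p (t # ts) \<longleftrightarrow> t \<in> trans M \<and> src_st M t = p \<and> is_run M (tgt_st M t) ts"

fun run_end :: "'a mnfa \<Rightarrow> nat \<Rightarrow> nat list \<Rightarrow> nat" where
  "run_end M p [] = p"
| "run_end M p (t # ts) = run_end M (tgt_st M t) ts"

text \<open>Nodes of Gamma(p): runs starting at p (root: the empty run).\<close>
definition runs :: "'a mnfa \<Rightarrow> nat \<Rightarrow> nat list set" where
  "runs M p = {\<rho>. is_run M p \<rho>}"

definition Gamma_edges :: "('a \<Rightarrow> 'a) \<Rightarrow> 'a mnfa \<Rightarrow> nat \<Rightarrow> (nat list \<times> 'a \<times> nat list) set" where
  "Gamma_edges iv M p =
     {(\<rho>, lab M t, \<rho> @ [t]) | \<rho> t. is_run M p (\<rho> @ [t])} \<union>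
     {(\<rho> @ [t], iv (lab M t), \<rho>) | \<rho> t. is_run M p (\<rho> @ [t])}"

text \<open>Rooted node-labelled tree (V,E,r,l) is regular: isomorphic to Gamma(p) for some mNFA,
  via a root-preserving graph isomorphism f and a bijection g between the sets of node labels
  compatible with the labellings (node rho of Gamma(p) is labelled by run_end).\<close>
definition regular_labelled ::
  "'a set \<Rightarrow> ('a \<Rightarrow> 'a) \<Rightarrow> 'v set \<Rightarrow> ('v \<times> 'a \<times> 'v) set \<Rightarrow> 'v \<Rightarrow> ('v \<Rightarrow> 'l) \<Rightarrow> bool" where
  "regular_labelled A iv V E r l \<longleftrightarrow>
     (\<exists>(M :: 'a mnfa) p f g.
        mnfa_wf A M \<and> p \<in> states M \<and>
        bij_betw f V (runs M p) \<and> f r = [] \<and>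
        (\<forall>x\<in>V. \<forall>y\<in>V. \<forall>a. (x, a, y) \<in> E \<longleftrightarrow> (f x, a, f y) \<in> Gamma_edges iv M p) \<and>
        bij_betw g (l ` V) (run_end M p ` runs M p) \<and>
        (\<forall>x\<in>V. run_end M p (f x) = g (l x)))"

text \<open>Unlabelled rooted tree is regular if regular for some node labelling.  Labels are taken
  in nat w.l.o.g. (the label set of a regular labelled tree is finite).\<close>
definition regular_tree ::
  "'a set \<Rightarrow> ('a \<Rightarrow> 'a) \<Rightarrow> 'v set \<Rightarrow> ('v \<times> 'a \<times> 'v) set \<Rightarrow> 'v \<Rightarrow> bool" where
  "regular_tree A iv V E r \<longleftrightarrow> (\<exists>l :: 'v \<Rightarrow> nat. regular_labelled A iv V E r l)"

end

theory Submission
  imports Defs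
begin

text \<open>Moving the root of \<Gamma>(p) across one edge, from the empty run to a run [t0], gives again a
  tree of the form \<Gamma>(q): the new automaton has a fresh state for the new root, with the
  transitions leaving the target of t0 plus one transition back, labelled by the inverse of the
  label of t0, to a fresh copy of p from which t0 has been removed; all other states are copied.
  Iterating along the path from u to v and labelling each node by the state its run ends in
  transfers regularity from root u to root v.\<close>

definition graph_iso ::
  "'v set \<Rightarrow> ('v \<times> 'a \<times> 'v) set \<Rightarrow> 'w set \<Rightarrow> ('w \<times> 'a \<times> 'w) set \<Rightarrow> ('v \<Rightarrow> 'w) \<Rightarrow> bool" where
  "graph_iso V E V' E' f \<longleftrightarrow>
     bij_betw f V V' \<and> (\<forall>x\<in>V. \<forall>y\<in>V. \<forall>a. (x, a, y) \<in> E \<longleftrightarrow> (f x, a, f y) \<in> E')"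

lemma graph_iso_id: "graph_iso V E V E (\<lambda>x. x)"
  by (simp add: graph_iso_def bij_betw_def)

lemma graph_iso_comp:
  assumes "graph_iso V E V' E' f" and "graph_iso V' E' V'' E'' g"
  shows "graph_iso V E V'' E'' (g \<circ> f)"
  using assms bij_betw_trans[of f V V' g V''] bij_betwE[of f V V']
  unfolding graph_iso_def by auto

lemma regular_tree_iff_graph_iso:
  "regular_tree A iv V E r \<longleftrightarrow>
     (\<exists>(M :: 'a mnfa) p f. mnfa_wf A M \<and> p \<in> states M \<and>
        graph_iso V E (runs M p) (Gamma_edges iv M p) f \<and> f r = [])"
proof
  assume "regular_tree A iv V E r"
  then show "\<exists>(M :: 'a mnfa) p f. mnfa_wf A M \<and> p \<in> states M \<and>
      graph_iso V E (runs M p) (Gamma_edges iv M p) f \<and> f r = []"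
    unfolding regular_tree_def regular_labelled_def graph_iso_def by blast
next
  assume "\<exists>(M :: 'a mnfa) p f. mnfa_wf A M \<and> p \<in> states M \<and>
      graph_iso V E (runs M p) (Gamma_edges iv M p) f \<and> f r = []"
  then obtain M :: "'a mnfa" and p f where
    wf: "mnfa_wf A M" "p \<in> states M" and iso: "graph_iso V E (runs M p) (Gamma_edges iv M p) f"
    and root: "f r = []"
    by blast
  have "f ` V = runs M p"
    using iso by (simp add: graph_iso_def bij_betw_imp_surj_on)
  then have "(\<lambda>x. run_end M p (f x)) ` V = run_end M p ` runs M p"
    by (simp add: image_image[symmetric])
  then have "regular_labelled A iv V E r (\<lambda>x. run_end M p (f x))"
    unfolding regular_labelled_def using wf iso root
    by (intro exI[of _ M] exI[of _ p] exI[of _ f] exI[of _ id]) (simp add: graph_iso_def)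
  then show "regular_tree A iv V E r"
    unfolding regular_tree_def by blast
qed

lemma is_run_append:
  "is_run M p (\<rho> @ \<sigma>) \<longleftrightarrow> is_run M p \<rho> \<and> is_run M (run_end M p \<rho>) \<sigma>"
  by (induction \<rho> arbitrary: p) auto

lemma run_end_snoc: "run_end M p (\<rho> @ [t]) = tgt_st M t"
  by (induction \<rho> arbitrary: p) auto

lemma Gamma_edges_snoc:
  "is_run M p (\<rho> @ [t]) \<Longrightarrow> (\<rho>, lab M t, \<rho> @ [t]) \<in> Gamma_edges iv M p"
  unfolding Gamma_edges_def by blast

lemma Gamma_edges_snoc_inverse:
  "is_run M p (\<rho> @ [t]) \<Longrightarrow> (\<rho> @ [t], iv (lab M t), \<rho>) \<in> Gamma_edges iv M p"
  unfolding Gamma_edges_def by blast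

lemma Gamma_edges_sym:
  assumes "involutive_alphabet A iv" and "mnfa_wf A M"
    and "(x, a, y) \<in> Gamma_edges iv M p"
  shows "(y, iv a, x) \<in> Gamma_edges iv M p"
proof -
  have "iv (iv (lab M t)) = lab M t" if "is_run M p (\<rho> @ [t])" for \<rho> t
    using assms(1,2) that by (auto simp: is_run_append involutive_alphabet_def mnfa_wf_def)
  then show ?thesis
    using assms(3) unfolding Gamma_edges_def by force
qed

lemma Gamma_edges_from_root:
  "([], a, y) \<in> Gamma_edges iv M p \<Longrightarrow> \<exists>t. y = [t] \<and> t \<in> trans M \<and> src_st M t = p"
  unfolding Gamma_edges_def by auto

lemma Gamma_edges_map:
  assumes "involutive_alphabet A iv" and "mnfa_wf A M'"
    and tree_edges: "\<And>\<rho> t. is_run M p (\<rho> @ [t]) \<Longrightarrow>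
      (h \<rho>, lab M t, h (\<rho> @ [t])) \<in> Gamma_edges iv M' p'"
    and "(x, a, y) \<in> Gamma_edges iv M p"
  shows "(h x, a, h y) \<in> Gamma_edges iv M' p'"
  using assms(4) unfolding Gamma_edges_def[of iv M p]
  by (auto intro: tree_edges Gamma_edges_sym[OF assms(1,2)])

lemma graph_iso_Gamma_edgesI:
  assumes "involutive_alphabet A iv" and "mnfa_wf A M" and "mnfa_wf A M'"
    and "\<And>\<rho>. is_run M p \<rho> \<Longrightarrow> is_run M' p' (h \<rho>)"
    and "\<And>\<sigma>. is_run M' p' \<sigma> \<Longrightarrow> is_run M p (g \<sigma>)"
    and "\<And>\<rho>. is_run M p \<rho> \<Longrightarrow> g (h \<rho>) = \<rho>"
    and "\<And>\<sigma>. is_run M' p' \<sigma> \<Longrightarrow> h (g \<sigma>) = \<sigma>"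
    and "\<And>\<rho> t. is_run M p (\<rho> @ [t]) \<Longrightarrow> (h \<rho>, lab M t, h (\<rho> @ [t])) \<in> Gamma_edges iv M' p'"
    and "\<And>\<sigma> c. is_run M' p' (\<sigma> @ [c]) \<Longrightarrow> (g \<sigma>, lab M' c, g (\<sigma> @ [c])) \<in> Gamma_edges iv M p"
  shows "graph_iso (runs M p) (Gamma_edges iv M p) (runs M' p') (Gamma_edges iv M' p') h"
  unfolding graph_iso_def
proof (intro conjI ballI allI)
  show "bij_betw h (runs M p) (runs M' p')"
    by (rule bij_betw_byWitness[where f' = g]) (auto simp: runs_def assms(4-7))
next
  fix x y a assume "x \<in> runs M p" "y \<in> runs M p"
  then have "g (h x) = x" "g (h y) = y"
    by (simp_all add: runs_def assms(6))
  then show "(x, a, y) \<in> Gamma_edges iv M p \<longleftrightarrow> (h x, a, h y) \<in> Gamma_edges iv M' p'"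
    using Gamma_edges_map[OF assms(1,3,8)] Gamma_edges_map[OF assms(1,2,9)] by metis
qed

text \<open>State 0 is the new root, corresponding to the run [t0]; state 1 is the old root p with the
  branch t0 cut off; state s + 2 is a copy of s.  Transition 3 leads from the new root back to
  the old one, and 4 t, 4 t + 1, 4 t + 2 are the copies of t leaving a copied state, state 0 and
  state 1 respectively.\<close>
definition reroot_mnfa :: "('a \<Rightarrow> 'a) \<Rightarrow> 'a mnfa \<Rightarrow> nat \<Rightarrow> nat \<Rightarrow> 'a mnfa" where
  "reroot_mnfa iv M p t0 =
     \<lparr>states = {0, 1} \<union> (\<lambda>s. s + 2) ` states M,
      trans = {3} \<union> (\<lambda>t. 4 * t) ` trans M
        \<union> (\<lambda>t. 4 * t + 1) ` {t \<in> trans M. src_st M t = tgt_st M t0}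
        \<union> (\<lambda>t. 4 * t + 2) ` {t \<in> trans M. src_st M t = p \<and> t \<noteq> t0},
      src_st = (\<lambda>c. if c mod 4 = 0 then src_st M (c div 4) + 2 else if c mod 4 = 2 then 1 else 0),
      lab = (\<lambda>c. if c = 3 then iv (lab M t0) else lab M (c div 4)),
      tgt_st = (\<lambda>c. if c = 3 then 1 else tgt_st M (c div 4) + 2)\<rparr>"

lemma div_mod_4_simps [simp]:
  fixes t :: nat
  shows "4 * t div 4 = t" "4 * t mod 4 = 0"
    "Suc (4 * t) div 4 = t" "Suc (4 * t) mod 4 = 1"
    "Suc (Suc (4 * t)) div 4 = t" "Suc (Suc (4 * t)) mod 4 = 2"
    "4 * t \<noteq> 3" "Suc (4 * t) \<noteq> 3" "Suc (Suc (4 * t)) \<noteq> 3"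
  by presburger+

lemma reroot_mnfa_simps [simp]:
  fixes iv M p t0 defines "R \<equiv> reroot_mnfa iv M p t0"
  shows "states R = {0, 1} \<union> (\<lambda>s. s + 2) ` states M"
    "3 \<in> trans R" "src_st R 3 = 0" "tgt_st R 3 = 1" "lab R 3 = iv (lab M t0)"
    "4 * t \<in> trans R \<longleftrightarrow> t \<in> trans M"
    "src_st R (4 * t) = Suc (Suc (src_st M t))" "tgt_st R (4 * t) = Suc (Suc (tgt_st M t))"
    "lab R (4 * t) = lab M t"
    "Suc (4 * t) \<in> trans R \<longleftrightarrow> t \<in> trans M \<and> src_st M t = tgt_st M t0"
    "src_st R (Suc (4 * t)) = 0" "tgt_st R (Suc (4 * t)) = Suc (Suc (tgt_st M t))"
    "lab R (Suc (4 * t)) = lab M t"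
    "Suc (Suc (4 * t)) \<in> trans R \<longleftrightarrow> t \<in> trans M \<and> src_st M t = p \<and> t \<noteq> t0"
    "src_st R (Suc (Suc (4 * t))) = 1" "tgt_st R (Suc (Suc (4 * t))) = Suc (Suc (tgt_st M t))"
    "lab R (Suc (Suc (4 * t))) = lab M t"
  unfolding R_def reroot_mnfa_def by auto presburger+

lemma reroot_mnfa_trans_cases:
  assumes "c \<in> trans (reroot_mnfa iv M p t0)"
  obtains "c = 3" | t where "c = 4 * t" | t where "c = Suc (4 * t)" | t where "c = Suc (Suc (4 * t))"
  using assms unfolding reroot_mnfa_def by auto

lemma mnfa_wf_reroot_mnfa:
  assumes "involutive_alphabet A iv" and "mnfa_wf A M" and "t0 \<in> trans M"
  shows "mnfa_wf A (reroot_mnfa iv M p t0)"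
proof -
  have "iv (lab M t0) \<in> A"
    using assms by (simp add: involutive_alphabet_def mnfa_wf_def)
  then show ?thesis
    using assms(2) unfolding mnfa_wf_def reroot_mnfa_def by auto
qed

lemma map_times_4_eq_iff [simp]: "map (\<lambda>t. 4 * t) \<rho> = map (\<lambda>t. 4 * t) \<rho>' \<longleftrightarrow> \<rho> = (\<rho>' :: nat list)"
  by (simp add: inj_map_eq_map inj_def)

lemma is_run_reroot_mnfa_copy:
  "is_run (reroot_mnfa iv M p t0) (Suc (Suc s)) \<sigma> \<longleftrightarrow>
     (\<exists>\<rho>. \<sigma> = map (\<lambda>t. 4 * t) \<rho> \<and> is_run M s \<rho>)"
proof (induction \<sigma> arbitrary: s)
  case (Cons c \<sigma>)
  show ?case
  proof
    assume run: "is_run (reroot_mnfa iv M p t0) (Suc (Suc s)) (c # \<sigma>)"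
    then have "c \<in> trans (reroot_mnfa iv M p t0)" by simp
    then obtain t where c: "c = 4 * t"
      by (cases rule: reroot_mnfa_trans_cases) (use run in auto)
    then obtain \<rho> where "\<sigma> = map (\<lambda>t. 4 * t) \<rho>" "is_run M (tgt_st M t) \<rho>"
      using run Cons.IH by auto
    with run c show "\<exists>\<rho>. c # \<sigma> = map (\<lambda>t. 4 * t) \<rho> \<and> is_run M s \<rho>"
      by (intro exI[of _ "t # \<rho>"]) auto
  next
    assume "\<exists>\<rho>. c # \<sigma> = map (\<lambda>t. 4 * t) \<rho> \<and> is_run M s \<rho>"
    then obtain t \<rho> where "c = 4 * t" "\<sigma> = map (\<lambda>t. 4 * t) \<rho>" "is_run M s (t # \<rho>)"
      by (auto simp: Cons_eq_map_conv)
    then show "is_run (reroot_mnfa iv M p t0) (Suc (Suc s)) (c # \<sigma>)"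
      using Cons.IH[of "tgt_st M t"] by auto
  qed
qed simp

lemma is_run_reroot_mnfa_old_root:
  "is_run (reroot_mnfa iv M p t0) 1 \<sigma> \<longleftrightarrow>
     \<sigma> = [] \<or> (\<exists>t \<rho>. \<sigma> = (4 * t + 2) # map (\<lambda>t. 4 * t) \<rho> \<and> t \<noteq> t0 \<and> is_run M p (t # \<rho>))"
proof (cases \<sigma>)
  case (Cons c \<sigma>')
  show ?thesis
  proof
    assume run: "is_run (reroot_mnfa iv M p t0) 1 \<sigma>"
    then have "c \<in> trans (reroot_mnfa iv M p t0)"
      using Cons by simp
    then obtain t where "c = 4 * t + 2"
      by (cases rule: reroot_mnfa_trans_cases) (use run Cons in auto)
    with run Cons show "\<sigma> = [] \<or> (\<exists>t \<rho>. \<sigma> = (4 * t + 2) # map (\<lambda>t. 4 * t) \<rho> \<and> t \<noteq> t0 \<and> is_run M p (t # \<rho>))"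
      by (auto simp: is_run_reroot_mnfa_copy)
  qed (auto simp: is_run_reroot_mnfa_copy)
qed simp

lemma is_run_reroot_mnfa_new_root:
  "is_run (reroot_mnfa iv M p t0) 0 \<sigma> \<longleftrightarrow>
     \<sigma> = [] \<or> (\<exists>\<sigma>'. \<sigma> = 3 # \<sigma>' \<and> is_run (reroot_mnfa iv M p t0) 1 \<sigma>') \<or>
     (\<exists>t \<rho>. \<sigma> = (4 * t + 1) # map (\<lambda>t. 4 * t) \<rho> \<and> is_run M (tgt_st M t0) (t # \<rho>))"
proof (cases \<sigma>)
  case (Cons c \<sigma>')
  show ?thesis
  proof
    assume run: "is_run (reroot_mnfa iv M p t0) 0 \<sigma>"
    then have "c \<in> trans (reroot_mnfa iv M p t0)"
      using Cons by simp
    then consider "c = 3" | t where "c = 4 * t + 1"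
      by (cases rule: reroot_mnfa_trans_cases) (use run Cons in auto)
    then show "\<sigma> = [] \<or> (\<exists>\<sigma>'. \<sigma> = 3 # \<sigma>' \<and> is_run (reroot_mnfa iv M p t0) 1 \<sigma>') \<or>
        (\<exists>t \<rho>. \<sigma> = (4 * t + 1) # map (\<lambda>t. 4 * t) \<rho> \<and> is_run M (tgt_st M t0) (t # \<rho>))"
      using run Cons by cases (auto simp: is_run_reroot_mnfa_copy)
  qed (auto simp: is_run_reroot_mnfa_copy)
qed simp

definition reroot_run :: "nat \<Rightarrow> nat list \<Rightarrow> nat list" where
  "reroot_run t0 \<rho> =
     (case \<rho> of
       [] \<Rightarrow> [3]
     | t # \<rho>' \<Rightarrow>
         if t = t0 then (case \<rho>' of [] \<Rightarrow> [] | t' # \<rho>'' \<Rightarrow> (4 * t' + 1) # map (\<lambda>t. 4 * t) \<rho>'')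
         else 3 # (4 * t + 2) # map (\<lambda>t. 4 * t) \<rho>')"

definition unreroot_run :: "nat \<Rightarrow> nat list \<Rightarrow> nat list" where
  "unreroot_run t0 \<sigma> =
     (if \<sigma> \<noteq> [] \<and> hd \<sigma> = 3 then map (\<lambda>c. c div 4) (tl \<sigma>) else t0 # map (\<lambda>c. c div 4) \<sigma>)"

lemma unreroot_reroot_run: "unreroot_run t0 (reroot_run t0 \<rho>) = \<rho>"
  by (auto simp: reroot_run_def unreroot_run_def comp_def split: list.split)

lemma reroot_run_snoc:
  "\<rho> \<noteq> [] \<Longrightarrow> \<rho> \<noteq> [t0] \<Longrightarrow> reroot_run t0 (\<rho> @ [t]) = reroot_run t0 \<rho> @ [4 * t]"
  by (cases \<rho>; cases "tl \<rho>") (auto simp: reroot_run_def)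

lemma unreroot_run_snoc:
  "\<sigma> \<noteq> [] \<or> c \<noteq> 3 \<Longrightarrow> unreroot_run t0 (\<sigma> @ [c]) = unreroot_run t0 \<sigma> @ [c div 4]"
  by (cases \<sigma>) (auto simp: unreroot_run_def)

context
  fixes A :: "'a set" and iv :: "'a \<Rightarrow> 'a" and M :: "'a mnfa" and p t0 :: nat
  assumes involutive: "involutive_alphabet A iv" and wf: "mnfa_wf A M"
    and t0: "t0 \<in> trans M" "src_st M t0 = p"
begin

lemma is_run_reroot_run: "is_run M p \<rho> \<Longrightarrow> is_run (reroot_mnfa iv M p t0) 0 (reroot_run t0 \<rho>)"
  using t0 by (cases \<rho>; cases "tl \<rho>") (auto simp: reroot_run_def is_run_reroot_mnfa_copy)

lemma is_run_unreroot_run: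
  "is_run (reroot_mnfa iv M p t0) 0 \<sigma> \<Longrightarrow> is_run M p (unreroot_run t0 \<sigma>)"
  unfolding is_run_reroot_mnfa_new_root is_run_reroot_mnfa_old_root
  using t0 by (elim disjE exE conjE) (auto simp: unreroot_run_def comp_def)

lemma reroot_unreroot_run:
  "is_run (reroot_mnfa iv M p t0) 0 \<sigma> \<Longrightarrow> reroot_run t0 (unreroot_run t0 \<sigma>) = \<sigma>"
  unfolding is_run_reroot_mnfa_new_root is_run_reroot_mnfa_old_root
  by (elim disjE exE conjE) (auto simp: reroot_run_def unreroot_run_def comp_def)

lemma Gamma_edges_reroot_run:
  assumes run: "is_run M p (\<rho> @ [t])"
  shows "(reroot_run t0 \<rho>, lab M t, reroot_run t0 (\<rho> @ [t])) \<in> Gamma_edges iv (reroot_mnfa iv M p t0) 0"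
proof -
  have run': "is_run (reroot_mnfa iv M p t0) 0 (reroot_run t0 (\<rho> @ [t]))"
    using is_run_reroot_run[OF run] .
  consider "\<rho> = []" "t = t0" | "\<rho> = []" "t \<noteq> t0" | "\<rho> = [t0]" | "\<rho> \<noteq> []" "\<rho> \<noteq> [t0]"
    by blast
  then show ?thesis
  proof cases
    case 1
    \<comment> \<open>after rerooting, this edge is the inverse of transition 3\<close>
    have "iv (iv (lab M t0)) = lab M t0"
      using involutive wf t0 by (simp add: involutive_alphabet_def mnfa_wf_def)
    with 1 show ?thesis
      using Gamma_edges_snoc_inverse[of "reroot_mnfa iv M p t0" 0 "[]" 3 iv]
      by (simp add: reroot_run_def)
  next
    case 2
    then show ?thesis
      using run' Gamma_edges_snoc[of "reroot_mnfa iv M p t0" 0 "[3]" "4 * t + 2" iv]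
      by (simp add: reroot_run_def)
  next
    case 3
    then show ?thesis
      using run' Gamma_edges_snoc[of "reroot_mnfa iv M p t0" 0 "[]" "4 * t + 1" iv]
      by (simp add: reroot_run_def)
  next
    case 4
    then show ?thesis
      using run' Gamma_edges_snoc[of "reroot_mnfa iv M p t0" 0 "reroot_run t0 \<rho>" "4 * t" iv]
      by (simp add: reroot_run_snoc)
  qed
qed

lemma Gamma_edges_unreroot_run:
  assumes run: "is_run (reroot_mnfa iv M p t0) 0 (\<sigma> @ [c])"
  shows "(unreroot_run t0 \<sigma>, lab (reroot_mnfa iv M p t0) c, unreroot_run t0 (\<sigma> @ [c]))
    \<in> Gamma_edges iv M p"
proof (cases "c = 3")
  case True
  \<comment> \<open>no transition enters state 0, so transition 3 can only be taken first\<close>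
  have "\<sigma> = []"
  proof (rule ccontr)
    assume "\<sigma> \<noteq> []"
    then obtain \<sigma>' c' where "\<sigma> = \<sigma>' @ [c']"
      by (cases \<sigma> rule: rev_exhaust) auto
    with run True show False
      by (auto simp: is_run_append run_end_snoc reroot_mnfa_def)
  qed
  with True show ?thesis
    using t0 Gamma_edges_snoc_inverse[of M p "[]" t0 iv]
    by (simp add: unreroot_run_def)
next
  case False
  then have "lab (reroot_mnfa iv M p t0) c = lab M (c div 4)"
    by (simp add: reroot_mnfa_def)
  moreover have "is_run M p (unreroot_run t0 \<sigma> @ [c div 4])"
    using is_run_unreroot_run[OF run] False by (simp add: unreroot_run_snoc)
  ultimately show ?thesis
    using False Gamma_edges_snoc by (fastforce simp: unreroot_run_snoc)
qed

lemma graph_iso_reroot_mnfa: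
  "graph_iso (runs M p) (Gamma_edges iv M p)
     (runs (reroot_mnfa iv M p t0) 0) (Gamma_edges iv (reroot_mnfa iv M p t0) 0) (reroot_run t0)"
  using involutive wf mnfa_wf_reroot_mnfa[OF involutive wf t0(1)]
  by (rule graph_iso_Gamma_edgesI)
    (use is_run_reroot_run is_run_unreroot_run unreroot_reroot_run reroot_unreroot_run
      Gamma_edges_reroot_run Gamma_edges_unreroot_run in auto)

end

lemma Gamma_reroot_at_run:
  assumes involutive: "involutive_alphabet A iv" and wf: "mnfa_wf A M" and "p \<in> states M"
  shows "is_run M p \<rho> \<Longrightarrow> \<exists>(M' :: 'a mnfa) p' h. mnfa_wf A M' \<and> p' \<in> states M' \<and>
    graph_iso (runs M p) (Gamma_edges iv M p) (runs M' p') (Gamma_edges iv M' p') h \<and> h \<rho> = []"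
proof (induction \<rho> rule: rev_induct)
  case Nil
  show ?case
    using assms graph_iso_id by (intro exI[of _ M] exI[of _ p] exI[of _ "\<lambda>x. x"]) simp
next
  case (snoc t \<rho>)
  have run: "is_run M p \<rho>" "is_run M p (\<rho> @ [t])"
    using snoc.prems by (simp_all add: is_run_append)
  obtain M1 :: "'a mnfa" and p1 h1 where wf1: "mnfa_wf A M1"
    and iso1: "graph_iso (runs M p) (Gamma_edges iv M p) (runs M1 p1) (Gamma_edges iv M1 p1) h1"
    and root1: "h1 \<rho> = []"
    using snoc.IH[OF run(1)] by blast
  have "\<rho> \<in> runs M p" "\<rho> @ [t] \<in> runs M p"
    using run by (simp_all add: runs_def)
  moreover have "(\<rho>, lab M t, \<rho> @ [t]) \<in> Gamma_edges iv M p"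
    using run(2) by (rule Gamma_edges_snoc)
  ultimately have "([], lab M t, h1 (\<rho> @ [t])) \<in> Gamma_edges iv M1 p1"
    using iso1 root1 unfolding graph_iso_def by auto
  then obtain t1 where t1: "h1 (\<rho> @ [t]) = [t1]" "t1 \<in> trans M1" "src_st M1 t1 = p1"
    by (auto dest: Gamma_edges_from_root)
  let ?M2 = "reroot_mnfa iv M1 p1 t1"
  have "graph_iso (runs M p) (Gamma_edges iv M p) (runs ?M2 0) (Gamma_edges iv ?M2 0) (reroot_run t1 \<circ> h1)"
    using iso1 graph_iso_reroot_mnfa[OF involutive wf1 t1(2,3)] by (rule graph_iso_comp)
  moreover have "(reroot_run t1 \<circ> h1) (\<rho> @ [t]) = []"
    using t1(1) by (simp add: reroot_run_def)
  moreover have "mnfa_wf A ?M2"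
    using involutive wf1 t1(2) by (rule mnfa_wf_reroot_mnfa)
  moreover have "0 \<in> states ?M2"
    by simp
  ultimately show ?case
    by blast
qed

lemma regular_tree_reroot:
  assumes "involutive_alphabet A iv" and "v \<in> V" and "regular_tree A iv V E u"
  shows "regular_tree A iv V E v"
proof -
  obtain M :: "'a mnfa" and p f where wf: "mnfa_wf A M" "p \<in> states M"
    and iso: "graph_iso V E (runs M p) (Gamma_edges iv M p) f"
    using assms(3) unfolding regular_tree_iff_graph_iso by blast
  have "f v \<in> runs M p"
    using iso assms(2) unfolding graph_iso_def by (blast intro: bij_betw_apply)
  then obtain M' :: "'a mnfa" and p' h where wf': "mnfa_wf A M'" "p' \<in> states M'"
    and iso': "graph_iso (runs M p) (Gamma_edges iv M p) (runs M' p') (Gamma_edges iv M' p') h"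
    and root': "h (f v) = []"
    using Gamma_reroot_at_run[OF assms(1) wf] unfolding runs_def by blast
  have "graph_iso V E (runs M' p') (Gamma_edges iv M' p') (h \<circ> f)"
    using iso iso' by (rule graph_iso_comp)
  moreover have "(h \<circ> f) v = []"
    using root' by simp
  ultimately show ?thesis
    unfolding regular_tree_iff_graph_iso using wf' by blast
qed

theorem proposition3p2:
  fixes A :: "'a set" and iv :: "'a \<Rightarrow> 'a"
    and V :: "'v set" and E :: "('v \<times> 'a \<times> 'v) set" and r u v :: 'v
  assumes "involutive_alphabet A iv"
    and "A_graph A V E"
    and "involutive_graph iv E"
    and "rooted_tree iv V E r"
    and "u \<in> V" and "v \<in> V"
  shows "regular_tree A iv V E u \<longleftrightarrow> regular_tree A iv V E v"
  using regular_tree_reroot[OF assms(1) assms(5)] regular_tree_reroot[OF assms(1) assms(6)] by blast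

end
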